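(* Fix integers $k\ge 1$ and $j\in\{1,\dots,2^k\}$ and a real number $\beta>0$. Let $q_j=1/(2^k-j+1)$ and let $\nu_j$ be the probability distribution on $Z=XY\in\{0,1\}^2$ given by $\nu_j(X=0,Y=0)=1-3q_j/4$ and $\nu_j(X=x,Y=y)=q_j/4$ whenever $x\neq 0$ or $y\neq 0$. Let $\mathcal{M}_j$ be the set of probability distributions $\mu$ of $(C,Z)$, with $C=AB\in\{0,1\}^2$ and $Z=XY\in\{0,1\}^2$, of the form $\mu(C=c,Z=z)=\nu_j(Z=z)\,\mu(C=c\mid Z=z)$ where the conditional distribution $\mu(C\mid Z)$ belongs to $\mathcal{T}$. If $F_j:\{0,1\}^2\times\{0,1\}^2\to[0,\infty)$ is a PEF with power $\beta$ for $\mathcal{M}_j$, then the function $(c,z)\mapsto 4\,\nu_j(Z=z)\,F_j(cz)$ is a PEF with power $\beta$ for $\mathcal{M}_{2^k}$ (the model obtained for $j=2^k$, in which the input distribution is uniform).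
   Context: $\mathcal{T}$ denotes the set of conditional distributions $\mu(C\mid Z)$ of outcomes $C=AB\in\{0,1\}^2$ given settings $Z=XY\in\{0,1\}^2$ that (i) satisfy the non-signaling conditions: $\sum_b\mu(ab\mid xy)$ does not depend on $y$ and $\sum_a\mu(ab\mid xy)$ does not depend on $x$; and (ii) satisfy Tsirelson's bounds: with correlators $E_{xy}=\sum_{a,b}(-1)^{a+b}\mu(ab\mid xy)$, one has $|E_{00}+E_{01}+E_{10}+E_{11}-2E_{x'y'}|\le 2\sqrt2$ for every $x'y'\in\{0,1\}^2$. For a set $\mathcal{M}$ of distributions of $(C,Z)$ and $\beta>0$, a probability estimation factor (PEF) with power $\beta$ for $\mathcal{M}$ is a non-negative function $F$ of $(c,z)$ such that $\sum_{c,z}\mu(C=c,Z=z)\,F(cz)\,\mu(C=c\mid Z=z)^{\beta}\le 1$ for every $\mu\in\mathcal{M}$. *)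

theory Defs
  imports Complex_Main
begin

text \<open>Bits are encoded as bool (False = 0, True = 1).
  Outcomes c = (a,b), settings z = (x,y).
  A conditional distribution P c z stands for P(C=c | Z=z);
  a joint distribution mu c z stands for mu(C=c, Z=z).\<close>

type_synonym bit2 = "bool \<times> bool"

definition sgnb :: "bool \<Rightarrow> real" where
  "sgnb a = (if a then -1 else 1)"

definition correlator :: "(bit2 \<Rightarrow> bit2 \<Rightarrow> real) \<Rightarrow> bool \<Rightarrow> bool \<Rightarrow> real" where
  "correlator P x y = (\<Sum>a\<in>UNIV. \<Sum>b\<in>UNIV. sgnb a * sgnb b * P (a,b) (x,y))"

definition T_set :: "(bit2 \<Rightarrow> bit2 \<Rightarrow> real) set" where
  "T_set = {P.
     (\<forall>c z. 0 \<le> P c z) \<and>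
     (\<forall>z. (\<Sum>c\<in>UNIV. P c z) = 1) \<and>
     (\<forall>a x y y'. (\<Sum>b\<in>UNIV. P (a,b) (x,y)) = (\<Sum>b\<in>UNIV. P (a,b) (x,y'))) \<and>
     (\<forall>b x x' y. (\<Sum>a\<in>UNIV. P (a,b) (x,y)) = (\<Sum>a\<in>UNIV. P (a,b) (x',y))) \<and>
     (\<forall>x' y'. \<bar>correlator P False False + correlator P False True
                + correlator P True False + correlator P True True
                - 2 * correlator P x' y'\<bar> \<le> 2 * sqrt 2)}"

definition condp :: "(bit2 \<Rightarrow> bit2 \<Rightarrow> real) \<Rightarrow> bit2 \<Rightarrow> bit2 \<Rightarrow> real" where
  "condp mu c z = mu c z / (\<Sum>c'\<in>UNIV. mu c' z)"

definition is_PEF :: "real \<Rightarrow> (bit2 \<Rightarrow> bit2 \<Rightarrow> real) set \<Rightarrow> (bit2 \<Rightarrow> bit2 \<Rightarrow> real) \<Rightarrow> bool" where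
  "is_PEF \<beta> M F \<longleftrightarrow> (\<forall>c z. 0 \<le> F c z) \<and>
     (\<forall>mu\<in>M. (\<Sum>c\<in>UNIV. \<Sum>z\<in>UNIV. mu c z * F c z * condp mu c z powr \<beta>) \<le> 1)"

definition qj :: "nat \<Rightarrow> nat \<Rightarrow> real" where
  "qj k j = 1 / (2 ^ k - real j + 1)"

definition nu :: "nat \<Rightarrow> nat \<Rightarrow> bit2 \<Rightarrow> real" where
  "nu k j z = (if z = (False, False) then 1 - 3 * qj k j / 4 else qj k j / 4)"

definition model :: "nat \<Rightarrow> nat \<Rightarrow> (bit2 \<Rightarrow> bit2 \<Rightarrow> real) set" where
  "model k j = {mu. \<exists>P\<in>T_set. \<forall>c z. mu c z = nu k j z * P c z}"

end

theory Submission
  imports Defs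
begin

text \<open>Both models share the set of conditional distributions and differ only in the input
  distribution, so the PEF sum for a joint distribution with inputs \<open>n'\<close> equals, term by term,
  the PEF sum for the joint distribution with the same conditionals and inputs \<open>n\<close>, once \<open>F\<close> is
  multiplied by the likelihood ratio \<open>n / n'\<close>.  For the uniform inputs \<open>1/4\<close> this ratio is
  \<open>4 \<nu>\<^sub>j\<close>.  Neither Tsirelson's bounds nor \<open>\<beta> > 0\<close> play a role; only positivity of
  \<open>\<nu>\<^sub>j\<close>, i.e. \<open>j \<le> 2^k\<close>, is needed.\<close>

definition input_model :: "(bit2 \<Rightarrow> real) \<Rightarrow> (bit2 \<Rightarrow> bit2 \<Rightarrow> real) set
    \<Rightarrow> (bit2 \<Rightarrow> bit2 \<Rightarrow> real) set" where
  "input_model n S = {mu. \<exists>P\<in>S. \<forall>c z. mu c z = n z * P c z}"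

lemma model_eq_input_model: "model k j = input_model (nu k j) T_set"
  unfolding model_def input_model_def ..

lemma condp_input_times_conditional:
  assumes "(\<Sum>c\<in>UNIV. P c z) = 1" and "n z \<noteq> 0"
  shows "condp (\<lambda>c z. n z * P c z) c z = P c z"
  using assms by (simp add: condp_def flip: sum_distrib_left)

lemma is_PEF_change_input:
  assumes stochastic: "\<And>P z. P \<in> S \<Longrightarrow> (\<Sum>c\<in>UNIV. P c z) = 1"
    and n_pos: "\<And>z. 0 < n z" and n'_pos: "\<And>z. 0 < n' z"
    and PEF: "is_PEF \<beta> (input_model n S) F"
  shows "is_PEF \<beta> (input_model n' S) (\<lambda>c z. n z / n' z * F c z)"
  unfolding is_PEF_def
proof (intro conjI allI ballI)
  have F_nonneg: "0 \<le> F c z" for c z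
    using PEF unfolding is_PEF_def by blast
  fix c z
  show "0 \<le> n z / n' z * F c z"
    using F_nonneg n_pos n'_pos by (simp add: less_imp_le)
next
  fix mu assume "mu \<in> input_model n' S"
  then obtain P where "P \<in> S" and mu_eq: "mu = (\<lambda>c z. n' z * P c z)"
    unfolding input_model_def by blast
  define mu_n where "mu_n = (\<lambda>c z. n z * P c z)"
  have "mu_n \<in> input_model n S"
    using \<open>P \<in> S\<close> unfolding input_model_def mu_n_def by blast
  then have bound: "(\<Sum>c\<in>UNIV. \<Sum>z\<in>UNIV. mu_n c z * F c z * condp mu_n c z powr \<beta>) \<le> 1"
    using PEF unfolding is_PEF_def by blast
  have "mu c z * (n z / n' z * F c z) * condp mu c z powr \<beta>
      = mu_n c z * F c z * condp mu_n c z powr \<beta>" for c z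
    using stochastic[OF \<open>P \<in> S\<close>, of z] n_pos[of z] n'_pos[of z]
    by (simp add: mu_eq mu_n_def condp_input_times_conditional)
  with bound show "(\<Sum>c\<in>UNIV. \<Sum>z\<in>UNIV. mu c z * (n z / n' z * F c z) * condp mu c z powr \<beta>) \<le> 1"
    by simp
qed

lemma qj_pos_le_1:
  assumes "j \<le> 2 ^ k"
  shows "0 < qj k j" and "qj k j \<le> 1"
proof -
  have "real j \<le> 2 ^ k"
    using assms by (metis of_nat_le_iff of_nat_numeral of_nat_power)
  then have denominator_ge_1: "1 \<le> 2 ^ k - real j + 1"
    by linarith
  show "0 < qj k j"
    unfolding qj_def using denominator_ge_1 by (intro divide_pos_pos) linarith+
  show "qj k j \<le> 1"
    unfolding qj_def using denominator_ge_1 by (intro divide_le_eq_1_pos[THEN iffD2]) linarith+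
qed

lemma nu_pos:
  assumes "j \<le> 2 ^ k"
  shows "0 < nu k j z"
  using qj_pos_le_1[OF assms] unfolding nu_def by auto

lemma nu_uniform: "nu k (2 ^ k) z = 1 / 4"
  unfolding nu_def qj_def by simp

theorem proposition1:
  fixes k j :: nat and \<beta> :: real and F :: "bit2 \<Rightarrow> bit2 \<Rightarrow> real"
  assumes "k \<ge> 1" and "1 \<le> j" and "j \<le> 2 ^ k" and "\<beta> > 0"
    and "is_PEF \<beta> (model k j) F"
  shows "is_PEF \<beta> (model k (2 ^ k)) (\<lambda>c z. 4 * nu k j z * F c z)"
proof -
  have "is_PEF \<beta> (input_model (nu k (2 ^ k)) T_set) (\<lambda>c z. nu k j z / nu k (2 ^ k) z * F c z)"
  proof (rule is_PEF_change_input)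
    show "(\<Sum>c\<in>UNIV. P c z) = 1" if "P \<in> T_set" for P z
      using that unfolding T_set_def by blast
    show "0 < nu k j z" "0 < nu k (2 ^ k) z" for z
      using nu_pos \<open>j \<le> 2 ^ k\<close> by auto
    show "is_PEF \<beta> (input_model (nu k j) T_set) F"
      using \<open>is_PEF \<beta> (model k j) F\<close> by (simp only: model_eq_input_model)
  qed
  then show ?thesis
    by (simp add: model_eq_input_model nu_uniform mult.commute)
qed

end
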